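(* Let $\phi:[0,\infty)\to\mathbb R$ be convex with $\phi(1)=0$, and let $E$ be the associated entropy. For every $\mathbf p\in\Delta^N$ with $\langle\mathbf u^{(1)},\mathbf p\rangle>0$ one has $E(\mathbf M\mathbf p)\le E(\mathbf p)$. Moreover, if $\phi$ is strictly convex, then $E(\mathbf M\mathbf p)=E(\mathbf p)$ if and only if $\mathbf p$ belongs to the quasi-stationary set $\mathcal Q$.
   Context: Fix an integer $N\ge 2$ and a type selection vector $(\mathsf s_0,\dots,\mathsf s_N)$ with $\mathsf s_0=0$, $\mathsf s_N=1$ and $0<\mathsf s_i<1$ for $1\le i\le N-1$. The Moran matrix $\mathbf M=(M_{ij})_{i,j=0}^N$ is defined by $M_{ij}=0$ if $|i-j|>1$, $M_{i+1,i}=\frac{N-i}{N}\mathsf s_i$, $M_{i-1,i}=\frac{i}{N}(1-\mathsf s_i)$, $M_{ii}=1-M_{i+1,i}-M_{i-1,i}$ (column-stochastic; $M_{ij}$ is the probability of going from state $j$ to state $i$; probability vectors evolve by $\mathbf p\mapsto\mathbf M\mathbf p$). The core matrix $\widetilde{\mathbf M}=(M_{ij})_{i,j=1}^{N-1}$ has a simple Perron eigenvalue $\mu_1>0$ with positive left/right eigenvectors $\widetilde{\mathbf u}^{(1)},\widetilde{\mathbf v}^{(1)}\in\mathbb R^{N-1}$, normalized by $\sum_i v^{(1)}_i=1$, $\sum_i u^{(1)}_iv^{(1)}_i=1$. Let $\Delta^N=\{\mathbf x\in\mathbb R^{N+1}:x_i\ge0,\ \sum_{i=0}^Nx_i=1\}$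 and, for $\mathbf p=(p_0,\dots,p_N)$, $\langle\mathbf u^{(1)},\mathbf p\rangle:=\sum_{i=1}^{N-1}u^{(1)}_ip_i$. For $\mathbf p\in\Delta^N$ with $\langle\mathbf u^{(1)},\mathbf p\rangle>0$ the entropy is \[ E(\mathbf p)=\sum_{i=1}^{N-1}\phi\!\left(\frac{p_i}{v^{(1)}_i\langle\mathbf u^{(1)},\mathbf p\rangle}\right)v^{(1)}_iu^{(1)}_i . \] Let $\hat{\mathbf v}^{(1)}=(0,v^{(1)}_1,\dots,v^{(1)}_{N-1},0)\in\mathbb R^{N+1}$ and $\mathbf e_0,\mathbf e_N$ the standard basis vectors of $\mathbb R^{N+1}$ at positions $0$ and $N$. The quasi-stationary set is $\mathcal Q=\{\alpha\mathbf e_0+\lambda\hat{\mathbf v}^{(1)}+\beta\mathbf e_N:\ \alpha,\beta,\lambda\ge0,\ \alpha+\beta+\lambda=1\}$. *)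

theory Defs
  imports "HOL-Analysis.Analysis"
begin

definition strictly_convex_on :: "real set \<Rightarrow> (real \<Rightarrow> real) \<Rightarrow> bool" where
  "strictly_convex_on S f \<longleftrightarrow> convex S \<and>
     (\<forall>x\<in>S. \<forall>y\<in>S. \<forall>t. x \<noteq> y \<and> 0 < t \<and> t < 1 \<longrightarrow>
        f ((1 - t) * x + t * y) < (1 - t) * f x + t * f y)"

text \<open>Moran matrix entries M i j (probability of going from state j to state i),
  indices 0..N; vectors are functions nat => real, relevant on 0..N.\<close>
definition moran_M :: "nat \<Rightarrow> (nat \<Rightarrow> real) \<Rightarrow> nat \<Rightarrow> nat \<Rightarrow> real" where
  "moran_M N s i j =
     (if i = j + 1 then (real N - real j) / real N * s j
      else if j = i + 1 then real j / real N * (1 - s j)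
      else if i = j then 1 - (real N - real j) / real N * s j - real j / real N * (1 - s j)
      else 0)"

definition moran_apply :: "nat \<Rightarrow> (nat \<Rightarrow> real) \<Rightarrow> (nat \<Rightarrow> real) \<Rightarrow> nat \<Rightarrow> real" where
  "moran_apply N s p = (\<lambda>i. \<Sum>j\<in>{0..N}. moran_M N s i j * p j)"

definition prob_simplex :: "nat \<Rightarrow> (nat \<Rightarrow> real) set" where
  "prob_simplex N = {x. (\<forall>i\<in>{0..N}. 0 \<le> x i) \<and> (\<Sum>i\<in>{0..N}. x i) = 1}"

definition core_ip :: "nat \<Rightarrow> (nat \<Rightarrow> real) \<Rightarrow> (nat \<Rightarrow> real) \<Rightarrow> real" where
  "core_ip N u p = (\<Sum>i\<in>{1..N-1}. u i * p i)"

definition entropy ::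
  "(real \<Rightarrow> real) \<Rightarrow> nat \<Rightarrow> (nat \<Rightarrow> real) \<Rightarrow> (nat \<Rightarrow> real) \<Rightarrow> (nat \<Rightarrow> real) \<Rightarrow> real" where
  "entropy \<phi> N u v p =
     (\<Sum>i\<in>{1..N-1}. \<phi> (p i / (v i * core_ip N u p)) * v i * u i)"

definition vhat :: "nat \<Rightarrow> (nat \<Rightarrow> real) \<Rightarrow> nat \<Rightarrow> real" where
  "vhat N v i = (if 1 \<le> i \<and> i \<le> N - 1 then v i else 0)"

definition quasi_stationary :: "nat \<Rightarrow> (nat \<Rightarrow> real) \<Rightarrow> (nat \<Rightarrow> real) set" where
  "quasi_stationary N v =
     {x. \<exists>\<alpha> \<beta> lam. \<alpha> \<ge> 0 \<and> \<beta> \<ge> 0 \<and> lam \<ge> 0 \<and> \<alpha> + \<beta> + lam = 1 \<and>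
        (\<forall>i\<in>{0..N}. x i = (if i = 0 then \<alpha> else 0) + lam * vhat N v i
                          + (if i = N then \<beta> else 0))}"

end

theory Submission
  imports Defs
begin

text \<open>
  Normalise \<open>p\<close> on the core by the Perron vectors, \<open>x\<^sub>j = p\<^sub>j / (v\<^sub>j \<langle>u, p\<rangle>)\<close>.
  Since the absorbing states do not feed the core (\<open>s\<^sub>0 = 0\<close>, \<open>s\<^sub>N = 1\<close>) and
  \<open>\<langle>u, M p\<rangle> = \<mu> \<langle>u, p\<rangle>\<close>, the normalised \<open>M p\<close> is \<open>W x\<close> for the Doob transform
  \<open>W\<^sub>i\<^sub>j = M\<^sub>i\<^sub>j v\<^sub>j / (\<mu> v\<^sub>i)\<close>, a stochastic matrix whose stationary weights \<open>v\<^sub>i u\<^sub>i\<close> are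
  exactly the weights of \<open>E\<close>. Jensen's inequality in each row of \<open>W\<close> followed by stationarity
  gives \<open>E(M p) \<le> E(p)\<close>. For strictly convex \<open>\<phi>\<close>, equality forces \<open>x\<close> to be constant along
  every positive entry of \<open>W\<close>; the core of \<open>M\<close> has positive diagonal and superdiagonal, so \<open>x\<close>
  is constant and \<open>p\<close> is proportional to \<open>v\<close> on the core, which for a probability vector
  means that \<open>p\<close> is quasi-stationary. Conversely, \<open>M\<close> maps such \<open>p\<close> to a multiple of itself
  on the core, and \<open>E\<close> is invariant under scaling.
\<close>

lemma strictly_convex_on_imp_convex_on:
  fixes f :: "real \<Rightarrow> real"
  assumes "strictly_convex_on S f"
  shows "convex_on S f"
proof
  show "convex S" using assms by (simp add: strictly_convex_on_def)
  fix t x y :: real assume "0 < t" "t < 1" "x \<in> S" "y \<in> S"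
  then show "f ((1 - t) *\<^sub>R x + t *\<^sub>R y) \<le> (1 - t) * f x + t * f y"
    using assms unfolding strictly_convex_on_def
    by (cases "x = y") (simp add: algebra_simps, fastforce intro: less_imp_le)
qed

lemma strictly_convex_on_sum_eq_imp_eq:
  fixes a x :: "'a \<Rightarrow> real"
  assumes strict: "strictly_convex_on S f"
    and A: "finite A" "k \<in> A" and a_k: "a k > 0" and a_sum: "(\<Sum>j\<in>A. a j) = 1"
    and a_nonneg: "\<And>j. j \<in> A \<Longrightarrow> a j \<ge> 0" and x_in: "\<And>j. j \<in> A \<Longrightarrow> x j \<in> S"
    and eq: "f (\<Sum>j\<in>A. a j * x j) = (\<Sum>j\<in>A. a j * f (x j))"
  shows "x k = (\<Sum>j\<in>A. a j * x j)"
proof (rule ccontr)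
  assume ne: "x k \<noteq> (\<Sum>j\<in>A. a j * x j)"
  define B where "B = A - {k}"
  define b where "b = 1 - a k"
  have sum_A_split: "(\<Sum>j\<in>A. g j) = g k + (\<Sum>j\<in>B. g j)" for g :: "'a \<Rightarrow> real"
    unfolding B_def using A by (simp add: sum.remove)
  have B_sum: "(\<Sum>j\<in>B. a j) = b"
    using sum_A_split[of a] a_sum b_def by simp
  have b_nonneg: "b \<ge> 0"
    unfolding B_sum[symmetric] B_def using a_nonneg by (auto intro: sum_nonneg)
  have b_pos: "b > 0"
  proof (rule ccontr)
    assume "\<not> b > 0"
    then have "b = 0" using b_nonneg by simp
    then have "\<forall>j\<in>B. a j = 0"
      using B_sum a_nonneg A(1) sum_nonneg_eq_0_iff[of B a] unfolding B_def by auto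
    then show False using ne sum_A_split[of "\<lambda>j. a j * x j"] b_def \<open>b = 0\<close> by simp
  qed
  have b_less_1: "b < 1" using a_k b_def by simp
  define z where "z = (\<Sum>j\<in>B. (a j / b) * x j)"
  have B: "finite B" "B \<noteq> {}" "(\<Sum>j\<in>B. a j / b) = 1"
    "\<And>j. j \<in> B \<Longrightarrow> a j / b \<ge> 0" "\<And>j. j \<in> B \<Longrightarrow> x j \<in> S"
    using A(1) B_sum b_pos a_nonneg x_in
    by (auto simp: sum_divide_distrib[symmetric], auto simp: B_def)
  have z_in: "z \<in> S"
    using convex_sum[OF B(1) _ B(3,4,5)] strict unfolding z_def strictly_convex_on_def by simp
  have B_scale: "(\<Sum>j\<in>B. a j * g j) = b * (\<Sum>j\<in>B. (a j / b) * g j)" for g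
    using b_pos by (simp add: sum_distrib_left)
  have mean: "(\<Sum>j\<in>A. a j * x j) = (1 - b) * x k + b * z"
    using sum_A_split[of "\<lambda>j. a j * x j"] B_scale[of x] b_def z_def by simp
  have "x k \<noteq> z" using ne mean by (auto simp: algebra_simps)
  then have "f (\<Sum>j\<in>A. a j * x j) < (1 - b) * f (x k) + b * f z"
    unfolding mean using strict b_pos b_less_1 x_in[OF A(2)] z_in
    by (auto simp: strictly_convex_on_def)
  moreover have "f z \<le> (\<Sum>j\<in>B. (a j / b) * f (x j))"
    using convex_on_sum[OF B(1,2) strictly_convex_on_imp_convex_on[OF strict] B(3,4,5)]
    unfolding z_def by simp
  then have "(1 - b) * f (x k) + b * f z \<le> (\<Sum>j\<in>A. a j * f (x j))"
    using sum_A_split[of "\<lambda>j. a j * f (x j)"] B_scale[of "\<lambda>j. f (x j)"] b_pos b_def by simp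
  ultimately show False using eq by simp
qed

definition perron_entropy ::
  "(real \<Rightarrow> real) \<Rightarrow> 'a set \<Rightarrow> ('a \<Rightarrow> real) \<Rightarrow> ('a \<Rightarrow> real) \<Rightarrow> ('a \<Rightarrow> real) \<Rightarrow> real" where
  "perron_entropy \<phi> C u v p = (\<Sum>i\<in>C. \<phi> (p i / (v i * (\<Sum>j\<in>C. u j * p j))) * v i * u i)"

definition mat_act :: "'a set \<Rightarrow> ('a \<Rightarrow> 'a \<Rightarrow> real) \<Rightarrow> ('a \<Rightarrow> real) \<Rightarrow> 'a \<Rightarrow> real" where
  "mat_act C A p i = (\<Sum>j\<in>C. A i j * p j)"

lemma perron_entropy_cong:
  assumes "\<And>i. i \<in> C \<Longrightarrow> p i = q i"
  shows "perron_entropy \<phi> C u v p = perron_entropy \<phi> C u v q"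
  using assms unfolding perron_entropy_def by (intro sum.cong) simp_all

lemma mat_act_cong:
  assumes "\<And>j. j \<in> C \<Longrightarrow> p j = q j"
  shows "mat_act C A p = mat_act C A q"
  using assms unfolding mat_act_def by (intro ext sum.cong) simp_all

lemma perron_entropy_scale:
  assumes "t \<noteq> 0"
  shows "perron_entropy \<phi> C u v (\<lambda>i. t * p i) = perron_entropy \<phi> C u v p"
  using assms unfolding perron_entropy_def
  by (simp add: mult.left_commute[of _ t] sum_distrib_left[symmetric])

locale positive_eigenpair =
  fixes C :: "'a set" and A :: "'a \<Rightarrow> 'a \<Rightarrow> real" and u v :: "'a \<Rightarrow> real" and \<mu> :: real
  assumes finite_C: "finite C"
    and A_nonneg: "\<And>i j. \<lbrakk>i \<in> C; j \<in> C\<rbrakk> \<Longrightarrow> A i j \<ge> 0"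
    and mu_pos: "\<mu> > 0"
    and u_pos: "\<And>i. i \<in> C \<Longrightarrow> u i > 0"
    and v_pos: "\<And>i. i \<in> C \<Longrightarrow> v i > 0"
    and right_eigen: "\<And>i. i \<in> C \<Longrightarrow> (\<Sum>j\<in>C. A i j * v j) = \<mu> * v i"
    and left_eigen: "\<And>j. j \<in> C \<Longrightarrow> (\<Sum>i\<in>C. u i * A i j) = \<mu> * u j"
begin

definition density :: "('a \<Rightarrow> real) \<Rightarrow> 'a \<Rightarrow> real" where
  "density p i = p i / (v i * (\<Sum>j\<in>C. u j * p j))"

text \<open>The Doob transform of \<open>A\<close> by \<open>v\<close>: a stochastic matrix with stationary weights \<open>v i * u i\<close>.\<close>
definition weight :: "'a \<Rightarrow> 'a \<Rightarrow> real" where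
  "weight i j = A i j * v j / (\<mu> * v i)"

lemma v_neq_0 [simp]: "i \<in> C \<Longrightarrow> v i \<noteq> 0"
  using v_pos by (metis less_irrefl)

lemma perron_entropy_density:
  "perron_entropy \<phi> C u v p = (\<Sum>i\<in>C. \<phi> (density p i) * v i * u i)"
  unfolding perron_entropy_def density_def ..

lemma weight_nonneg: "\<lbrakk>i \<in> C; j \<in> C\<rbrakk> \<Longrightarrow> weight i j \<ge> 0"
  unfolding weight_def using A_nonneg v_pos mu_pos by (simp add: less_imp_le)

lemma weight_row_sum: "i \<in> C \<Longrightarrow> (\<Sum>j\<in>C. weight i j) = 1"
  unfolding weight_def using right_eigen v_pos mu_pos
  by (simp add: sum_divide_distrib[symmetric])

lemma weight_stationary: "j \<in> C \<Longrightarrow> (\<Sum>i\<in>C. v i * u i * weight i j) = v j * u j"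
proof -
  assume j: "j \<in> C"
  have "(\<Sum>i\<in>C. v i * u i * weight i j) = (\<Sum>i\<in>C. u i * A i j) * v j / \<mu>"
    unfolding weight_def sum_distrib_right sum_divide_distrib
    using v_pos by (intro sum.cong) simp_all
  then show ?thesis using left_eigen[OF j] mu_pos by simp
qed

lemma density_nonneg:
  assumes "\<And>j. j \<in> C \<Longrightarrow> p j \<ge> 0" and "i \<in> C"
  shows "density p i \<ge> 0"
  using assms u_pos v_pos unfolding density_def
  by (auto intro!: divide_nonneg_nonneg mult_nonneg_nonneg sum_nonneg simp: less_imp_le)

lemma inner_mat_act: "(\<Sum>i\<in>C. u i * mat_act C A p i) = \<mu> * (\<Sum>j\<in>C. u j * p j)"
proof -
  have "(\<Sum>i\<in>C. u i * mat_act C A p i) = (\<Sum>j\<in>C. (\<Sum>i\<in>C. u i * A i j) * p j)"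
    unfolding mat_act_def sum_distrib_left sum_distrib_right
    by (subst sum.swap) (simp add: mult.assoc)
  also have "\<dots> = \<mu> * (\<Sum>j\<in>C. u j * p j)"
    by (simp add: left_eigen sum_distrib_left mult.assoc)
  finally show ?thesis .
qed

lemma density_mat_act:
  assumes "i \<in> C"
  shows "density (mat_act C A p) i = (\<Sum>j\<in>C. weight i j * density p j)"
  unfolding density_def inner_mat_act
  unfolding mat_act_def sum_divide_distrib weight_def
  using assms v_pos mu_pos by (intro sum.cong) simp_all

lemma perron_entropy_weighted:
  "perron_entropy \<phi> C u v p = (\<Sum>i\<in>C. (\<Sum>j\<in>C. weight i j * \<phi> (density p j)) * v i * u i)"
proof -
  have "(\<Sum>i\<in>C. (\<Sum>j\<in>C. weight i j * \<phi> (density p j)) * v i * u i)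
      = (\<Sum>j\<in>C. (\<Sum>i\<in>C. v i * u i * weight i j) * \<phi> (density p j))"
    unfolding sum_distrib_right by (subst sum.swap) (simp add: mult_ac)
  also have "\<dots> = (\<Sum>j\<in>C. \<phi> (density p j) * v j * u j)"
    by (intro sum.cong) (simp_all add: weight_stationary)
  finally show ?thesis by (simp add: perron_entropy_density)
qed

lemma density_mat_act_jensen:
  assumes "convex_on {0..} \<phi>" and "\<And>j. j \<in> C \<Longrightarrow> p j \<ge> 0" and i: "i \<in> C"
  shows "\<phi> (density (mat_act C A p) i) \<le> (\<Sum>j\<in>C. weight i j * \<phi> (density p j))"
  using convex_on_sum[OF finite_C _ assms(1) weight_row_sum[OF i], of "density p"]
    i weight_nonneg density_nonneg[OF assms(2)]
  by (auto simp: density_mat_act)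

lemma perron_entropy_mat_act_le:
  assumes "convex_on {0..} \<phi>" and "\<And>j. j \<in> C \<Longrightarrow> p j \<ge> 0"
  shows "perron_entropy \<phi> C u v (mat_act C A p) \<le> perron_entropy \<phi> C u v p"
  unfolding perron_entropy_weighted[of \<phi> p] unfolding perron_entropy_density
  using assms u_pos v_pos
  by (intro sum_mono mult_right_mono density_mat_act_jensen) (auto simp: less_imp_le)

lemma density_eq_if_perron_entropy_mat_act_eq:
  assumes strict: "strictly_convex_on {0..} \<phi>" and p_nonneg: "\<And>j. j \<in> C \<Longrightarrow> p j \<ge> 0"
    and eq: "perron_entropy \<phi> C u v (mat_act C A p) = perron_entropy \<phi> C u v p"
    and i: "i \<in> C" and k: "k \<in> C" and A_ik: "A i k > 0"
  shows "density p k = density (mat_act C A p) i"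
proof -
  define gap where "gap l = (\<Sum>j\<in>C. weight l j * \<phi> (density p j)) - \<phi> (density (mat_act C A p) l)"
    for l
  have gap_nonneg: "gap l * (v l * u l) \<ge> 0" if "l \<in> C" for l
    using density_mat_act_jensen[OF strictly_convex_on_imp_convex_on[OF strict] p_nonneg that]
      u_pos[OF that] v_pos[OF that] unfolding gap_def by simp
  have "(\<Sum>i\<in>C. gap i * (v i * u i))
      = perron_entropy \<phi> C u v p - perron_entropy \<phi> C u v (mat_act C A p)"
    unfolding perron_entropy_weighted[of \<phi> p] unfolding perron_entropy_density gap_def
    by (simp add: left_diff_distrib sum_subtractf mult.assoc)
  then have "(\<Sum>i\<in>C. gap i * (v i * u i)) = 0"
    using eq by simp
  then have "gap i = 0"
    using sum_nonneg_eq_0_iff[OF finite_C gap_nonneg] i u_pos[OF i] v_pos[OF i] by fastforce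
  then have "\<phi> (\<Sum>j\<in>C. weight i j * density p j) = (\<Sum>j\<in>C. weight i j * \<phi> (density p j))"
    unfolding gap_def density_mat_act[OF i] by simp
  moreover have "weight i k > 0"
    using A_ik v_pos[OF i] v_pos[OF k] mu_pos unfolding weight_def by simp
  ultimately show ?thesis
    unfolding density_mat_act[OF i]
    by (intro strictly_convex_on_sum_eq_imp_eq[OF strict finite_C k _ weight_row_sum[OF i]])
       (auto intro: weight_nonneg[OF i] density_nonneg[OF p_nonneg])
qed

lemma mat_act_eigenvector: "i \<in> C \<Longrightarrow> mat_act C A (\<lambda>j. t * v j) i = \<mu> * (t * v i)"
  unfolding mat_act_def using right_eigen[of i]
  by (simp add: mult.left_commute[of _ t] sum_distrib_left[symmetric])

lemma perron_entropy_mat_act_eigenvector: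
  "perron_entropy \<phi> C u v (mat_act C A (\<lambda>j. t * v j)) = perron_entropy \<phi> C u v (\<lambda>j. t * v j)"
  using mu_pos
  by (simp add: perron_entropy_cong[OF mat_act_eigenvector] perron_entropy_scale[where t = \<mu>])

lemma perron_entropy_mat_act_eq_if_proportional:
  assumes "\<And>j. j \<in> C \<Longrightarrow> p j = t * v j"
  shows "perron_entropy \<phi> C u v (mat_act C A p) = perron_entropy \<phi> C u v p"
proof -
  have "mat_act C A p = mat_act C A (\<lambda>j. t * v j)"
    "perron_entropy \<phi> C u v p = perron_entropy \<phi> C u v (\<lambda>j. t * v j)"
    by (rule mat_act_cong perron_entropy_cong, rule assms, assumption)+
  then show ?thesis
    using perron_entropy_mat_act_eigenvector by (simp only:)
qed

lemma proportional_if_density_eq: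
  assumes "(\<Sum>j\<in>C. u j * p j) \<noteq> 0" and k: "k \<in> C"
    and density_eq: "\<And>j. j \<in> C \<Longrightarrow> density p j = density p k"
  shows "\<forall>j\<in>C. p j = p k / v k * v j"
proof
  fix j assume j: "j \<in> C"
  show "p j = p k / v k * v j"
    using density_eq[OF j] j k assms(1) unfolding density_def by (simp add: field_simps)
qed

end

lemma eq_first_if_Suc_eq:
  fixes f :: "nat \<Rightarrow> 'a"
  assumes step: "\<And>n. a \<le> n \<Longrightarrow> n < b \<Longrightarrow> f (Suc n) = f n" and "a \<le> j" "j \<le> b"
  shows "f j = f a"
  using assms(2,3) by (induction rule: dec_induct) (simp_all add: step)

lemma perron_entropy_mat_act_eq_imp_proportional:
  fixes A :: "nat \<Rightarrow> nat \<Rightarrow> real"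
  assumes pair: "positive_eigenpair {a..b} A u v \<mu>" and "a \<le> b"
    and chain: "\<And>n. a \<le> n \<Longrightarrow> n < b \<Longrightarrow> 0 < A n n \<and> 0 < A n (Suc n)"
    and strict: "strictly_convex_on {0..} \<phi>" and p_nonneg: "\<And>j. j \<in> {a..b} \<Longrightarrow> p j \<ge> 0"
    and "(\<Sum>j\<in>{a..b}. u j * p j) \<noteq> 0"
    and eq: "perron_entropy \<phi> {a..b} u v (mat_act {a..b} A p) = perron_entropy \<phi> {a..b} u v p"
  shows "\<exists>t. \<forall>j\<in>{a..b}. p j = t * v j"
proof -
  interpret positive_eigenpair "{a..b}" A u v \<mu> by (fact pair)
  have step: "density p (Suc n) = density p n" if "a \<le> n" "n < b" for n
  proof -
    have "density p n = density (mat_act {a..b} A p) n"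
      by (rule density_eq_if_perron_entropy_mat_act_eq[OF strict p_nonneg eq])
         (use chain[OF that] that in auto)
    moreover have "density p (Suc n) = density (mat_act {a..b} A p) n"
      by (rule density_eq_if_perron_entropy_mat_act_eq[OF strict p_nonneg eq])
         (use chain[OF that] that in auto)
    ultimately show ?thesis by simp
  qed
  have "density p j = density p a" if "j \<in> {a..b}" for j
    using that by (intro eq_first_if_Suc_eq[where f = "density p", OF step]) auto
  moreover have "a \<in> {a..b}"
    using \<open>a \<le> b\<close> by simp
  ultimately have "\<forall>j\<in>{a..b}. p j = p a / v a * v j"
    using proportional_if_density_eq[OF \<open>(\<Sum>j\<in>{a..b}. u j * p j) \<noteq> 0\<close>] by blast
  then show ?thesis ..
qed

lemma moran_M_nonneg:
  assumes "j \<le> N" "0 \<le> s j" "s j \<le> 1"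
  shows "moran_M N s i j \<ge> 0"
proof -
  define a where "a = (real N - real j) / real N * s j"
  define b where "b = real j / real N * (1 - s j)"
  have "a \<le> (real N - real j) / real N" "b \<le> real j / real N"
    using assms unfolding a_def b_def by (intro mult_left_le; simp)+
  moreover have "(real N - real j) / real N + real j / real N \<le> 1"
    by (cases "N = 0") (simp_all add: diff_divide_distrib)
  moreover have "0 \<le> a" "0 \<le> b"
    using assms unfolding a_def b_def by simp_all
  moreover have "moran_M N s i j \<in> {a, b, 1 - a - b, 0}"
    unfolding moran_M_def a_def b_def by simp
  ultimately show ?thesis
    by auto
qed

lemma moran_M_diag_pos:
  assumes "j < N" "0 \<le> s j" "s j < 1"
  shows "moran_M N s j j > 0"
proof -
  have "(real N - real j) / real N > 0"
    using assms by simp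
  from mult_strict_left_mono[OF \<open>s j < 1\<close> this]
  have "(real N - real j) / real N * s j < (real N - real j) / real N"
    by (simp add: mult.commute)
  moreover have "real j / real N * (1 - s j) \<le> real j / real N"
    using assms by (intro mult_left_le) auto
  moreover have "(real N - real j) / real N + real j / real N = 1"
    using assms by (simp add: diff_divide_distrib)
  ultimately show ?thesis
    unfolding moran_M_def by simp
qed

lemma moran_M_superdiag_pos:
  assumes "0 < N" "s (Suc i) < 1"
  shows "moran_M N s i (Suc i) > 0"
  using assms unfolding moran_M_def by simp

lemma moran_apply_eq_mat_act:
  assumes s0: "s 0 = 0" and sN: "s N = 1" and i: "i \<in> {1..N-1}"
  shows "moran_apply N s p i = mat_act {1..N-1} (moran_M N s) p i"
proof -
  have "{0..N} = insert 0 (insert N {1..N-1})" "0 \<notin> insert N {1..N-1}" "N \<notin> {1..N-1}"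
    using i by auto
  moreover have "moran_M N s i 0 = 0" "moran_M N s i N = 0"
    using i s0 sN unfolding moran_M_def by auto
  ultimately show ?thesis
    unfolding moran_apply_def mat_act_def by simp
qed

lemma entropy_eq_perron_entropy: "entropy \<phi> N u v p = perron_entropy \<phi> {1..N-1} u v p"
  unfolding entropy_def perron_entropy_def core_ip_def ..

lemma quasi_stationary_iff_proportional:
  assumes N: "N \<ge> 2" and p: "p \<in> prob_simplex N"
    and v_pos: "\<forall>i\<in>{1..N-1}. v i > 0" and v_norm: "(\<Sum>i\<in>{1..N-1}. v i) = 1"
  shows "p \<in> quasi_stationary N v \<longleftrightarrow> (\<exists>t. \<forall>i\<in>{1..N-1}. p i = t * v i)"
proof
  assume "p \<in> quasi_stationary N v"
  then obtain \<alpha> \<beta> t where qs: "\<forall>i\<in>{0..N}. p i = (if i = 0 then \<alpha> else 0) + t * vhat N v i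
      + (if i = N then \<beta> else 0)"
    unfolding quasi_stationary_def by blast
  have "p i = t * v i" if "i \<in> {1..N-1}" for i
    using qs[rule_format, of i] that N by (auto simp: vhat_def)
  then show "\<exists>t. \<forall>i\<in>{1..N-1}. p i = t * v i" by blast
next
  assume "\<exists>t. \<forall>i\<in>{1..N-1}. p i = t * v i"
  then obtain t where t: "\<And>i. i \<in> {1..N-1} \<Longrightarrow> p i = t * v i" by blast
  have p_nonneg: "\<And>i. i \<in> {0..N} \<Longrightarrow> p i \<ge> 0" and p_sum: "(\<Sum>i\<in>{0..N}. p i) = 1"
    using p unfolding prob_simplex_def by auto
  have one: "1 \<in> {1..N-1}" using N by simp
  have "0 \<le> t * v 1" "0 < v 1"
    using t[OF one] p_nonneg[of 1] v_pos one by auto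
  then have t_nonneg: "t \<ge> 0"
    by (simp add: zero_le_mult_iff)
  have "(\<Sum>i\<in>{1..N-1}. p i) = (\<Sum>i\<in>{1..N-1}. t * v i)"
    using t by (rule sum.cong[OF refl])
  also have "\<dots> = t"
    using v_norm by (simp add: sum_distrib_left[symmetric])
  finally have "(\<Sum>i\<in>{1..N-1}. p i) = t" .
  moreover have "{0..N} = insert 0 (insert N {1..N-1})" "0 \<notin> insert N {1..N-1}" "N \<notin> {1..N-1}"
    using N by auto
  ultimately have total: "p 0 + p N + t = 1"
    using p_sum by simp
  have "p i = (if i = 0 then p 0 else 0) + t * vhat N v i + (if i = N then p N else 0)"
    if "i \<in> {0..N}" for i
    using that t[of i] N by (auto simp: vhat_def)
  then have decomp: "\<forall>i\<in>{0..N}. p i = (if i = 0 then p 0 else 0) + t * vhat N v i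
      + (if i = N then p N else 0)"
    by blast
  moreover have "p 0 \<ge> 0" "p N \<ge> 0"
    by (simp_all add: p_nonneg)
  ultimately show "p \<in> quasi_stationary N v"
    unfolding quasi_stationary_def mem_Collect_eq using t_nonneg total by blast
qed

theorem lemma3:
  fixes N :: nat and s u v p :: "nat \<Rightarrow> real" and \<mu> :: real and \<phi> :: "real \<Rightarrow> real"
  assumes N2: "N \<ge> 2"
    and s0: "s 0 = 0" and sN: "s N = 1"
    and s_mid: "\<forall>i\<in>{1..N-1}. 0 < s i \<and> s i < 1"
    and mu_pos: "\<mu> > 0"
    and v_pos: "\<forall>i\<in>{1..N-1}. v i > 0"
    and u_pos: "\<forall>i\<in>{1..N-1}. u i > 0"
    and v_eig: "\<forall>i\<in>{1..N-1}. (\<Sum>j\<in>{1..N-1}. moran_M N s i j * v j) = \<mu> * v i"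
    and u_eig: "\<forall>j\<in>{1..N-1}. (\<Sum>i\<in>{1..N-1}. u i * moran_M N s i j) = \<mu> * u j"
    and v_norm: "(\<Sum>i\<in>{1..N-1}. v i) = 1"
    and uv_norm: "(\<Sum>i\<in>{1..N-1}. u i * v i) = 1"
    and phi_convex: "convex_on {0..} \<phi>"
    and phi1: "\<phi> 1 = 0"
    and p_simplex: "p \<in> prob_simplex N"
    and p_pos: "core_ip N u p > 0"
  shows "entropy \<phi> N u v (moran_apply N s p) \<le> entropy \<phi> N u v p
       \<and> (strictly_convex_on {0..} \<phi> \<longrightarrow>
            (entropy \<phi> N u v (moran_apply N s p) = entropy \<phi> N u v p
               \<longleftrightarrow> p \<in> quasi_stationary N v))"
proof -
  let ?C = "{1..N-1}" and ?M = "moran_M N s"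
  have s_C: "0 \<le> s j" "s j < 1" if "j \<in> ?C" for j
    using s_mid that by (auto simp: less_imp_le)
  interpret E: positive_eigenpair ?C ?M u v \<mu>
  proof
    show "?M i j \<ge> 0" if "j \<in> ?C" for i j
      using s_C[OF that] that by (intro moran_M_nonneg) auto
  qed (use mu_pos u_pos v_pos v_eig u_eig in auto)
  have p_nonneg: "\<And>j. j \<in> ?C \<Longrightarrow> p j \<ge> 0"
    using p_simplex unfolding prob_simplex_def by auto
  have E_act: "entropy \<phi> N u v (moran_apply N s p) = perron_entropy \<phi> ?C u v (mat_act ?C ?M p)"
    unfolding entropy_eq_perron_entropy
    by (intro perron_entropy_cong moran_apply_eq_mat_act[OF s0 sN])
  have E_p: "entropy \<phi> N u v p = perron_entropy \<phi> ?C u v p"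
    by (rule entropy_eq_perron_entropy)
  have chain: "0 < ?M n n \<and> 0 < ?M n (Suc n)" if "1 \<le> n" "n < N - 1" for n
    using s_C that by (auto intro!: moran_M_diag_pos moran_M_superdiag_pos)
  have "(\<Sum>j\<in>?C. u j * p j) \<noteq> 0"
    using p_pos unfolding core_ip_def by simp
  then have "perron_entropy \<phi> ?C u v (mat_act ?C ?M p) = perron_entropy \<phi> ?C u v p
      \<longleftrightarrow> (\<exists>t. \<forall>j\<in>?C. p j = t * v j)" if "strictly_convex_on {0..} \<phi>"
    using perron_entropy_mat_act_eq_imp_proportional[OF E.positive_eigenpair_axioms _ chain that p_nonneg]
      E.perron_entropy_mat_act_eq_if_proportional N2 by auto
  then show ?thesis
    using E.perron_entropy_mat_act_le[OF phi_convex p_nonneg]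
      quasi_stationary_iff_proportional[OF N2 p_simplex v_pos v_norm]
    unfolding E_act E_p by simp
qed

end
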